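(* Let $X$ be a uniformly convex and uniformly smooth Banach space and let $(g_k)$ be bijective linear isometries of $X$ such that $(g_k^{-1})$ converges strongly (pointwise in norm). If $x_k\rightharpoondown0$, then $g_kx_k\rightharpoondown0$.
   Context: $x_k\rightharpoondown x$ (Δ-convergence) means: for every $y\in X$, $\limsup_{k\to\infty}(\|x_k-x\|-\|x_k-y\|)\le0$. *)

theory Defs
  imports "HOL-Analysis.Analysis" "HOL-Library.Extended_Real"
begin

definition uniformly_convex :: "'a::real_normed_vector itself \<Rightarrow> bool" where
  "uniformly_convex _ \<longleftrightarrow>
     (\<forall>e>0. \<exists>d>0. \<forall>x y::'a. norm x \<le> 1 \<longrightarrow> norm y \<le> 1 \<longrightarrow> norm (x - y) \<ge> e
        \<longrightarrow> norm ((1/2) *\<^sub>R (x + y)) \<le> 1 - d)"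

definition modulus_of_smoothness :: "'a::real_normed_vector itself \<Rightarrow> real \<Rightarrow> real" where
  "modulus_of_smoothness _ t =
     (SUP p \<in> {(x::'a, y). norm x = 1 \<and> norm y = t}. (norm (fst p + snd p) + norm (fst p - snd p)) / 2 - 1)"

definition uniformly_smooth :: "'a::real_normed_vector itself \<Rightarrow> bool" where
  "uniformly_smooth T \<longleftrightarrow> ((\<lambda>t. modulus_of_smoothness T t / t) \<longlongrightarrow> 0) (at_right 0)"

definition Delta_conv :: "(nat \<Rightarrow> 'a::real_normed_vector) \<Rightarrow> 'a \<Rightarrow> bool" where
  "Delta_conv xs x \<longleftrightarrow>
     (\<forall>y. limsup (\<lambda>k. ereal (norm (xs k - x) - norm (xs k - y))) \<le> 0)"

end

theory Submission
  imports Defs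
begin

text \<open>An isometry turns
  the distance from \<open>g\<^sub>k x\<^sub>k\<close> to a point \<open>y\<close> into the distance from \<open>x\<^sub>k\<close> to
  \<open>g\<^sub>k\<^sup>-\<^sup>1 y\<close>, and these points converge to some \<open>z\<close>; so the Delta-convergence
  defect of \<open>g\<^sub>k x\<^sub>k\<close> towards \<open>y\<close> exceeds that of \<open>x\<^sub>k\<close> towards \<open>z\<close> by at most a
  null sequence.\<close>

lemma Delta_conv_limsup_tendsto:
  fixes xs ys :: "nat \<Rightarrow> 'a::real_normed_vector"
  assumes "Delta_conv xs x" and "ys \<longlonglongrightarrow> y"
  shows "limsup (\<lambda>k. ereal (norm (xs k - x) - norm (xs k - ys k))) \<le> 0"
proof -
  have perturb: "(\<lambda>k. ereal (norm (ys k - y))) \<longlonglongrightarrow> 0"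
    using assms(2) by (simp add: zero_ereal_def tendsto_norm_zero_iff LIM_zero)
  have "norm (xs k - x) - norm (xs k - ys k)
      \<le> norm (ys k - y) + (norm (xs k - x) - norm (xs k - y))" for k
    using norm_triangle_ineq[of "xs k - ys k" "ys k - y"] by simp
  then have "limsup (\<lambda>k. ereal (norm (xs k - x) - norm (xs k - ys k)))
      \<le> limsup (\<lambda>k. ereal (norm (ys k - y)) + ereal (norm (xs k - x) - norm (xs k - y)))"
    by (intro Limsup_mono always_eventually allI) simp
  also have "\<dots> = limsup (\<lambda>k. ereal (norm (xs k - x) - norm (xs k - y)))"
    by (rule ereal_limsup_lim_add[OF perturb, simplified])
  also have "\<dots> \<le> 0"
    using assms(1) unfolding Delta_conv_def by blast
  finally show ?thesis .
qed

lemma norm_isometry_diff_eq: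
  fixes f :: "'a::real_normed_vector \<Rightarrow> 'b::real_normed_vector"
  assumes "linear f" and "surj f" and "\<And>x. norm (f x) = norm x"
  shows "norm (f x - y) = norm (x - inv f y)"
proof -
  have "f x - y = f (x - inv f y)"
    using linear_diff[OF assms(1)] surj_f_inv_f[OF assms(2)] by simp
  then show ?thesis
    using assms(3) by simp
qed

theorem lemma5p7:
  fixes g :: "nat \<Rightarrow> 'a::banach \<Rightarrow> 'a" and xs :: "nat \<Rightarrow> 'a"
  assumes "uniformly_convex TYPE('a)" and "uniformly_smooth TYPE('a)"
    and "\<And>k. linear (g k)" and "\<And>k. bij (g k)"
    and "\<And>k x. norm (g k x) = norm x"
    and "\<And>x. convergent (\<lambda>k. inv (g k) x)"
    and "Delta_conv xs 0"
  shows "Delta_conv (\<lambda>k. g k (xs k)) 0"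
  unfolding Delta_conv_def
proof
  fix y
  obtain z where "(\<lambda>k. inv (g k) y) \<longlonglongrightarrow> z"
    using assms(6) unfolding convergent_def by blast
  then have "limsup (\<lambda>k. ereal (norm (xs k - 0) - norm (xs k - inv (g k) y))) \<le> 0"
    using Delta_conv_limsup_tendsto[OF assms(7)] by blast
  moreover have "norm (g k (xs k) - y) = norm (xs k - inv (g k) y)" for k
    using norm_isometry_diff_eq[OF assms(3)] assms(4,5) bij_is_surj by blast
  ultimately show "limsup (\<lambda>k. ereal (norm (g k (xs k) - 0) - norm (g k (xs k) - y))) \<le> 0"
    using assms(5) by simp
qed

end
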